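(* Let $Q$ be a $G$-admissible quiver, with extended exchange matrix $\tilde B=\tilde B(Q)$. Let $K$ be a mutable $G$-orbit such that the quiver $\mu_K(Q)$ is also $G$-admissible. Then $(\mu_K(\tilde B))^G=\mu_K(\tilde B^G)$, where on the left $\mu_K=\prod_{k\in K}\mu_k$ is the composition of the mutations of $\tilde B$ at all indices of $K$, and on the right $\mu_K$ is the single matrix mutation of $\tilde B^G$ at the index $K$.
   Context: $Q$ is a quiver (no loops, no oriented 2-cycles) with vertices $1,\dots,m$, where $1,\dots,n$ are mutable and $n+1,\dots,m$ frozen (there are no arrows between frozen vertices). Its extended exchange matrix $\tilde B(Q)=(b_{ij})$ is the $m\times n$ matrix with $b_{ij}$ = (number of arrows $i\to j$) $-$ (number of arrows $j\to i$). Matrix mutation at mutable $k$: $b'_{ij}=-b_{ij}$ if $k\in\{i,j\}$, and $b'_{ij}=b_{ij}+\mathrm{sgn}(b_{ik})\max(b_{ik}b_{kj},0)$ otherwise; quiver mutation $\mu_k$ corresponds to this. A group $G$ acts on $\{1,\dots,m\}$; write $i\sim i'$ if $i,i'$ lie in the same $G$-orbit. $Q$ (or $\tilde B(Q)$) is $G$-admissible if: (1) for $i\sim i'$, $i$ is mutable iff $i'$ is; (2) $b_{ij}=b_{g(i),g(j)}$ for all $i,j$ and $g\in G$; (3) $b_{ii'}=0$ for mutable $i\sim i'$; (4) $b_{ij}b_{i'j}\ge0$ for $i\sim i'$ and mutable $j$. For $G$-admissible $Q$, orbits are mutable or frozen, and $\tilde B^G=(b^G_{IJ})$ is the matrix with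 rows indexed by $G$-orbits and columns by mutable $G$-orbits, $b^G_{IJ}=\sum_{i\in I}b_{ij}$ for any $j\in J$. By condition (3), the mutations $\mu_k$, $k\in K$, commute, so $\mu_K$ is well defined. *)

theory Defs
  imports "HOL-Algebra.Group_Action"
begin

text \<open>Vertices are 1..m; 1..n are mutable, n+1..m frozen.
  A quiver is given by its arrow-count function arr i j = number of arrows i to j.\<close>

definition is_quiver :: "nat \<Rightarrow> nat \<Rightarrow> (nat \<Rightarrow> nat \<Rightarrow> nat) \<Rightarrow> bool" where
  "is_quiver m n arr \<longleftrightarrow> n \<le> m \<and>
     (\<forall>i\<in>{1..m}. arr i i = 0) \<and>
     (\<forall>i\<in>{1..m}. \<forall>j\<in>{1..m}. arr i j = 0 \<or> arr j i = 0) \<and>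
     (\<forall>i\<in>{n<..m}. \<forall>j\<in>{n<..m}. arr i j = 0)"

text \<open>Extended exchange matrix: rows 1..m, columns 1..n (entries outside are irrelevant).\<close>
definition exmat :: "(nat \<Rightarrow> nat \<Rightarrow> nat) \<Rightarrow> nat \<Rightarrow> nat \<Rightarrow> int" where
  "exmat arr i j = int (arr i j) - int (arr j i)"

text \<open>Matrix mutation at index k (generic index type, used both for vertices and orbits).\<close>
definition mut :: "'i \<Rightarrow> ('i \<Rightarrow> 'i \<Rightarrow> int) \<Rightarrow> 'i \<Rightarrow> 'i \<Rightarrow> int" where
  "mut k B i j = (if i = k \<or> j = k then - B i j
                  else B i j + sgn (B i k) * max (B i k * B k j) 0)"

definition mutK :: "nat set \<Rightarrow> (nat \<Rightarrow> nat \<Rightarrow> int) \<Rightarrow> nat \<Rightarrow> nat \<Rightarrow> int" where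
  "mutK K B = fold mut (sorted_list_of_set K) B"

definition G_admissible ::
  "('a, 'c) monoid_scheme \<Rightarrow> ('a \<Rightarrow> nat \<Rightarrow> nat) \<Rightarrow> nat \<Rightarrow> nat \<Rightarrow> (nat \<Rightarrow> nat \<Rightarrow> int) \<Rightarrow> bool" where
  "G_admissible G \<phi> m n B \<longleftrightarrow>
     (\<forall>i\<in>{1..m}. \<forall>i'\<in>orbit G \<phi> i. (i \<le> n \<longleftrightarrow> i' \<le> n)) \<and>
     (\<forall>i\<in>{1..m}. \<forall>j\<in>{1..n}. \<forall>g\<in>carrier G. B i j = B (\<phi> g i) (\<phi> g j)) \<and>
     (\<forall>i\<in>{1..n}. \<forall>i'\<in>orbit G \<phi> i. B i i' = 0) \<and>
     (\<forall>i\<in>{1..m}. \<forall>i'\<in>orbit G \<phi> i. \<forall>j\<in>{1..n}. B i j * B i' j \<ge> 0)"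

text \<open>The orbit matrix B^G: b^G_{IJ} = sum over i in I of b_{ij} for (any) j in J.\<close>
definition orbmat :: "(nat \<Rightarrow> nat \<Rightarrow> int) \<Rightarrow> nat set \<Rightarrow> nat set \<Rightarrow> int" where
  "orbmat B I J = (\<Sum>i\<in>I. B i (SOME j. j \<in> J))"

end

theory Submission
  imports Defs
begin

text \<open>Because b_{kk'} = 0 for k, k' in K, the mutations at the vertices of K do not interact:
  for i, j outside K, the composite mutation adds to b_{ij} the sum over k in K of
  sgn(b_{ik}) max(b_{ik} b_{kj}, 0). By admissibility the entries b_{ik} (i in an orbit I) share a
  sign, as do the b_{kj} (k in K), and on such arguments this summand is linear in each variable;
  so summing over I collapses the double sum to the single summand of the orbit matrix.\<close>

context group_action
begin

lemma orbits_eq_orbit: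
  assumes "X \<in> orbits G E \<phi>" "x \<in> X"
  shows "X = orbit G \<phi> x"
proof -
  obtain y where y: "y \<in> E" "X = orbit G \<phi> y"
    using assms(1) unfolding orbits_def by blast
  have "x \<in> E" using assms(2) y element_image unfolding orbit_def by blast
  moreover have "orbit G \<phi> x \<in> orbits G E \<phi>" "x \<in> orbit G \<phi> x"
    using calculation orbit_refl unfolding orbits_def by auto
  ultimately show ?thesis
    using disjoint_union[OF assms(1)] assms(2) by blast
qed

lemma orbits_nonempty: "X \<in> orbits G E \<phi> \<Longrightarrow> X \<noteq> {}"
  unfolding orbits_def using orbit_refl by blast

lemma orbits_in_orbit:
  assumes "X \<in> orbits G E \<phi>" "x \<in> X" "y \<in> X"
  shows "y \<in> orbit G \<phi> x"
  using orbits_eq_orbit[OF assms(1,2)] assms(3) by simp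

lemma sum_orbit_action:
  assumes "X \<in> orbits G E \<phi>" "g \<in> carrier G"
  shows "(\<Sum>x\<in>X. f (\<phi> g x)) = sum f X"
proof -
  have XE: "X \<subseteq> E"
    using assms(1) orbits_coverture by blast
  have "\<phi> g ` X = X"
  proof
    show "\<phi> g ` X \<subseteq> X"
      using assms orbits_eq_orbit unfolding orbit_def by blast
    show "X \<subseteq> \<phi> g ` X"
    proof
      fix y assume "y \<in> X"
      then obtain x where x: "x \<in> E" "\<phi> g x = y"
        using bij_prop1[OF assms(2)] XE by blast
      then have "x \<in> orbit G \<phi> y"
        using orbit_sym[of x y] \<open>y \<in> X\<close> XE assms(2) unfolding orbit_def by blast
      then show "y \<in> \<phi> g ` X"
        using x orbits_eq_orbit[OF assms(1) \<open>y \<in> X\<close>] by blast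
    qed
  qed
  moreover have "inj_on (\<phi> g) X"
    using inj_prop[OF assms(2)] XE inj_on_subset by blast
  ultimately show ?thesis
    using sum.reindex[of "\<phi> g" X f] by simp
qed

end

definition mut_summand :: "int \<Rightarrow> int \<Rightarrow> int" where
  "mut_summand x y = sgn x * max (x * y) 0"

lemma mut_eq_mut_summand:
  "i \<noteq> k \<Longrightarrow> j \<noteq> k \<Longrightarrow> mut k B i j = B i j + mut_summand (B i k) (B k j)"
  unfolding mut_def mut_summand_def by simp

lemma mut_summand_commute: "mut_summand x y = mut_summand y x"
  unfolding mut_summand_def
  by (cases x "0::int" rule: linorder_cases; cases y "0::int" rule: linorder_cases)
     (auto simp: mult.commute mult_pos_neg mult_neg_pos)

lemma mut_summand_nonneg: "x \<ge> 0 \<Longrightarrow> mut_summand x y = x * max y 0"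
  unfolding mut_summand_def by (cases "x = 0") (auto simp: max_def mult_le_0_iff zero_le_mult_iff)

lemma mut_summand_nonpos: "x \<le> 0 \<Longrightarrow> mut_summand x y = x * max (- y) 0"
  unfolding mut_summand_def by (cases "x = 0") (auto simp: max_def mult_le_0_iff zero_le_mult_iff)

lemma same_sign_if_products_nonneg:
  assumes "\<forall>a\<in>S. \<forall>b\<in>S. (x a :: int) * x b \<ge> 0"
  shows "(\<forall>a\<in>S. x a \<ge> 0) \<or> (\<forall>a\<in>S. x a \<le> 0)"
proof (rule ccontr)
  assume "\<not> ?thesis"
  then obtain a b where "a \<in> S" "b \<in> S" "x a < 0" "x b > 0" by force
  then show False
    using assms mult_neg_pos[of "x a" "x b"] by force
qed

text \<open>On arguments of a common sign the summand is linear.\<close>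

lemma sum_mut_summand_left:
  assumes "\<forall>a\<in>S. \<forall>b\<in>S. (x a :: int) * x b \<ge> 0"
  shows "(\<Sum>a\<in>S. mut_summand (x a) y) = mut_summand (\<Sum>a\<in>S. x a) y"
  using same_sign_if_products_nonneg[OF assms]
proof
  assume "\<forall>a\<in>S. x a \<ge> 0"
  then show ?thesis
    by (simp add: mut_summand_nonneg sum_nonneg sum_distrib_right)
next
  assume "\<forall>a\<in>S. x a \<le> 0"
  then show ?thesis
    by (simp add: mut_summand_nonpos sum_nonpos sum_distrib_right)
qed

lemma sum_mut_summand_right:
  assumes "\<forall>a\<in>S. \<forall>b\<in>S. (y a :: int) * y b \<ge> 0"
  shows "(\<Sum>a\<in>S. mut_summand x (y a)) = mut_summand x (\<Sum>a\<in>S. y a)"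
  using sum_mut_summand_left[OF assms] by (simp add: mut_summand_commute)

lemma mut_unconnected:
  assumes "B k x = 0" "B x k = 0" "k \<noteq> x"
  shows "mut x B i k = B i k" "mut x B k j = B k j"
  using assms unfolding mut_def by auto

lemma fold_mut_unconnected:
  assumes "distinct ks" "\<forall>k\<in>set ks. \<forall>k'\<in>set ks. B k k' = 0"
  shows "fold mut ks B i j = (if i \<in> set ks \<or> j \<in> set ks then - B i j
           else B i j + (\<Sum>k\<in>set ks. mut_summand (B i k) (B k j)))"
  using assms
proof (induction ks arbitrary: B)
  case Nil
  then show ?case by simp
next
  case (Cons x ks)
  let ?B' = "mut x B"
  have unchanged: "?B' i k = B i k" "?B' k j = B k j" if "k \<in> set ks" for i j k
    using mut_unconnected[of B k x] that Cons.prems by auto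
  have IH: "fold mut ks ?B' i j = (if i \<in> set ks \<or> j \<in> set ks then - ?B' i j
           else ?B' i j + (\<Sum>k\<in>set ks. mut_summand (B i k) (B k j)))"
    using Cons.IH[of ?B'] Cons.prems unchanged by (simp cong: sum.cong)
  consider "i \<in> set ks \<or> j \<in> set ks"
    | "i \<notin> set ks" "j \<notin> set ks" "i = x \<or> j = x"
    | "i \<notin> set (x # ks)" "j \<notin> set (x # ks)"
    by auto
  then show ?case
  proof cases
    case 1
    then show ?thesis
      using IH unchanged by auto
  next
    case 2
    have "mut_summand (B i k) (B k j) = 0" if "k \<in> set (x # ks)" for k
      using 2 that Cons.prems by (auto simp: mut_summand_def)
    moreover have "?B' i j = - B i j"
      using 2 by (simp add: mut_def)
    ultimately show ?thesis
      using 2 IH by simp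
  next
    case 3
    then show ?thesis
      using IH Cons.prems by (simp add: mut_eq_mut_summand)
  qed
qed

corollary mutK_unconnected:
  assumes "finite K" "\<forall>k\<in>K. \<forall>k'\<in>K. B k k' = 0"
  shows "mutK K B i j = (if i \<in> K \<or> j \<in> K then - B i j
           else B i j + (\<Sum>k\<in>K. mut_summand (B i k) (B k j)))"
  using fold_mut_unconnected[of "sorted_list_of_set K" B i j] assms by (simp add: mutK_def)

locale admissible_matrix = group_action G "{1..m}" \<phi>
  for G :: "('a, 'c) monoid_scheme" and \<phi> :: "'a \<Rightarrow> nat \<Rightarrow> nat" and m :: nat +
  fixes n :: nat and B :: "nat \<Rightarrow> nat \<Rightarrow> int"
  assumes mutable_le: "n \<le> m"
    and orbit_mutable_iff: "\<lbrakk>i \<in> {1..m}; i' \<in> orbit G \<phi> i\<rbrakk> \<Longrightarrow> i \<le> n \<longleftrightarrow> i' \<le> n"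
    and B_invariant: "\<lbrakk>i \<in> {1..m}; j \<in> {1..n}; g \<in> carrier G\<rbrakk> \<Longrightarrow> B (\<phi> g i) (\<phi> g j) = B i j"
    and B_orbit_zero: "\<lbrakk>i \<in> {1..n}; i' \<in> orbit G \<phi> i\<rbrakk> \<Longrightarrow> B i i' = 0"
    and B_orbit_same_sign:
      "\<lbrakk>i \<in> {1..m}; i' \<in> orbit G \<phi> i; j \<in> {1..n}\<rbrakk> \<Longrightarrow> B i j * B i' j \<ge> 0"
begin

lemma mutable_orbit:
  assumes "X \<in> orbits G {1..n} \<phi>"
  shows "X \<in> orbits G {1..m} \<phi>" "X \<subseteq> {1..n}"
proof -
  obtain x where x: "x \<in> {1..n}" "X = orbit G \<phi> x"
    using assms unfolding orbits_def by blast
  then have xm: "x \<in> {1..m}"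
    using mutable_le by auto
  then show "X \<in> orbits G {1..m} \<phi>"
    using x unfolding orbits_def by blast
  show "X \<subseteq> {1..n}"
  proof
    fix y assume "y \<in> X"
    then have "y \<in> {1..m}"
      using x xm element_image unfolding orbit_def by blast
    moreover have "y \<le> n"
      using orbit_mutable_iff[OF xm] x \<open>y \<in> X\<close> by auto
    ultimately show "y \<in> {1..n}" by simp
  qed
qed

lemma orbit_products_nonneg:
  assumes "X \<in> orbits G {1..m} \<phi>" "a \<in> X" "b \<in> X" "j \<in> {1..n}"
  shows "B a j * B b j \<ge> 0"
proof -
  have "a \<in> {1..m}"
    using assms(1,2) orbits_coverture by blast
  then show ?thesis
    using B_orbit_same_sign orbits_in_orbit[OF assms(1-3)] assms(4) by blast
qed

lemma unconnected_in_mutable_orbit: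
  assumes "K \<in> orbits G {1..n} \<phi>" "k \<in> K" "k' \<in> K"
  shows "B k k' = 0"
proof -
  have "k' \<in> orbit G \<phi> k"
    using orbits_in_orbit[OF mutable_orbit(1)[OF assms(1)] assms(2,3)] .
  then show ?thesis
    using B_orbit_zero mutable_orbit(2)[OF assms(1)] assms(2) by blast
qed

lemma mutK_mutable_orbit:
  assumes "K \<in> orbits G {1..n} \<phi>"
  shows "mutK K B i j = (if i \<in> K \<or> j \<in> K then - B i j
           else B i j + (\<Sum>k\<in>K. mut_summand (B i k) (B k j)))"
proof (rule mutK_unconnected)
  show "finite K"
    using finite_subset[OF mutable_orbit(2)[OF assms]] by simp
  show "\<forall>k\<in>K. \<forall>k'\<in>K. B k k' = 0"
    using unconnected_in_mutable_orbit[OF assms] by blast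
qed

lemma column_sum_orbit_invariant:
  assumes I: "I \<in> orbits G {1..m} \<phi>" and J: "J \<in> orbits G {1..n} \<phi>"
    and "j \<in> J" "j' \<in> J"
  shows "(\<Sum>i\<in>I. B i j) = (\<Sum>i\<in>I. B i j')"
proof -
  obtain g where g: "g \<in> carrier G" "\<phi> g j = j'"
    using orbits_in_orbit[OF mutable_orbit(1)[OF J] assms(3,4)] unfolding orbit_def by blast
  have "j \<in> {1..n}"
    using mutable_orbit(2)[OF J] \<open>j \<in> J\<close> by blast
  then have "B i j = B (\<phi> g i) j'" if "i \<in> I" for i
  proof -
    have "i \<in> {1..m}"
      using that I orbits_coverture by blast
    then show ?thesis
      using B_invariant[of i j g] g \<open>j \<in> {1..n}\<close> by simp
  qed
  then have "(\<Sum>i\<in>I. B i j) = (\<Sum>i\<in>I. B (\<phi> g i) j')"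
    by (rule sum.cong[OF refl])
  also have "\<dots> = (\<Sum>i\<in>I. B i j')"
    by (rule sum_orbit_action[OF I g(1)])
  finally show ?thesis .
qed

lemma orbmat_eq_column_sum:
  assumes "I \<in> orbits G {1..m} \<phi>" "J \<in> orbits G {1..n} \<phi>" "j \<in> J"
  shows "orbmat B I J = (\<Sum>i\<in>I. B i j)"
  unfolding orbmat_def
  using column_sum_orbit_invariant[OF assms(1,2) someI[of "\<lambda>j. j \<in> J", OF assms(3)] assms(3)] .

theorem orbmat_mutK:
  assumes K: "K \<in> orbits G {1..n} \<phi>"
    and I: "I \<in> orbits G {1..m} \<phi>" and J: "J \<in> orbits G {1..n} \<phi>"
  shows "orbmat (mutK K B) I J = mut K (orbmat B) I J"
proof -
  define j where "j = (SOME j. j \<in> J)"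
  have "j \<in> J"
    unfolding j_def using orbits_nonempty[OF mutable_orbit(1)[OF J]] by (simp add: some_in_eq)
  have lhs: "orbmat (mutK K B) I J = (\<Sum>i\<in>I. mutK K B i j)"
    unfolding orbmat_def j_def ..
  have IJ: "orbmat B I J = (\<Sum>i\<in>I. B i j)"
    using orbmat_eq_column_sum[OF I J \<open>j \<in> J\<close>] .
  show ?thesis
  proof (cases "I = K \<or> J = K")
    case True
    then have "(\<Sum>i\<in>I. mutK K B i j) = - (\<Sum>i\<in>I. B i j)"
      using \<open>j \<in> J\<close> by (auto simp: mutK_mutable_orbit[OF K] sum_negf)
    then show ?thesis
      using True lhs IJ by (simp add: mut_def)
  next
    case False
    have "I \<inter> K = {}" "j \<notin> K"
      using False disjoint_union[OF _ mutable_orbit(1)[OF K]] I mutable_orbit(1)[OF J] \<open>j \<in> J\<close>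
      by blast+
    have IK: "orbmat B I K = (\<Sum>i\<in>I. B i k)" if "k \<in> K" for k
      using orbmat_eq_column_sum[OF I K that] .
    have KJ: "orbmat B K J = (\<Sum>k\<in>K. B k j)"
      using orbmat_eq_column_sum[OF mutable_orbit(1)[OF K] J \<open>j \<in> J\<close>] .
    have "j \<in> {1..n}" "K \<subseteq> {1..n}"
      using mutable_orbit(2) J K \<open>j \<in> J\<close> by blast+
    then have sign_I: "\<forall>a\<in>I. \<forall>b\<in>I. B a k * B b k \<ge> 0" if "k \<in> K" for k
      using orbit_products_nonneg[OF I] that by blast
    have sign_K: "\<forall>a\<in>K. \<forall>b\<in>K. B a j * B b j \<ge> 0"
      using orbit_products_nonneg[OF mutable_orbit(1)[OF K]] \<open>j \<in> {1..n}\<close> by blast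
    have "(\<Sum>i\<in>I. mutK K B i j) = (\<Sum>i\<in>I. B i j + (\<Sum>k\<in>K. mut_summand (B i k) (B k j)))"
      using \<open>I \<inter> K = {}\<close> \<open>j \<notin> K\<close> by (intro sum.cong) (auto simp: mutK_mutable_orbit[OF K])
    also have "\<dots> = (\<Sum>i\<in>I. B i j) + (\<Sum>k\<in>K. \<Sum>i\<in>I. mut_summand (B i k) (B k j))"
      by (simp add: sum.distrib sum.swap[of _ I K])
    also have "(\<Sum>k\<in>K. \<Sum>i\<in>I. mut_summand (B i k) (B k j))
        = (\<Sum>k\<in>K. mut_summand (orbmat B I K) (B k j))"
      using sum_mut_summand_left[OF sign_I] IK by simp
    also have "\<dots> = mut_summand (orbmat B I K) (orbmat B K J)"
      using sum_mut_summand_right[OF sign_K] KJ by simp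
    finally show ?thesis
      using False lhs IJ by (simp add: mut_eq_mut_summand)
  qed
qed

end

theorem lemma4p4p5:
  fixes G :: "('a, 'c) monoid_scheme" and \<phi> :: "'a \<Rightarrow> nat \<Rightarrow> nat"
    and arr :: "nat \<Rightarrow> nat \<Rightarrow> nat" and m n :: nat and K :: "nat set"
  assumes "is_quiver m n arr"
    and "group_action G {1..m} \<phi>"
    and "G_admissible G \<phi> m n (exmat arr)"
    and "K \<in> orbits G {1..n} \<phi>"
    and "G_admissible G \<phi> m n (mutK K (exmat arr))"
  shows "\<forall>I\<in>orbits G {1..m} \<phi>. \<forall>J\<in>orbits G {1..n} \<phi>.
           orbmat (mutK K (exmat arr)) I J = mut K (orbmat (exmat arr)) I J"
proof -
  interpret admissible_matrix G \<phi> m n "exmat arr"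
  proof (intro admissible_matrix.intro admissible_matrix_axioms.intro assms(2))
  qed (use assms(1,3) in \<open>auto simp: is_quiver_def G_admissible_def\<close>)
  show ?thesis
    using orbmat_mutK[OF assms(4)] by blast
qed

end
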